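(* Let $S$ be a finite non-abelian subset of $BS^{+}(1,3)$ with $k=|S|\geq 3$, and suppose that $S$ meets at least two distinct cosets of $\langle a\rangle$, i.e. in the coset decomposition $S=S_0\cup S_1\cup\cdots\cup S_t$ we have $t\geq 1$. Then $$|S^2|\geq \tfrac{7}{2}|S|-6.$$
   Context: $BS(1,3)=\langle a,b\mid ab=ba^3\rangle$ is the Baumslag–Solitar group. In it, $a^x b^m=b^m a^{3^m x}$ for all integers $x$ and $m\ge 0$, and every element of the form $b^m a^x$ ($m\ge 0$, $x\in\mathbb Z$) has a unique such representation. $BS^{+}(1,3)=\{b^m a^x: m\in\mathbb{Z}_{\ge 0},\ x\in\mathbb{Z}\}$ is a submonoid of $BS(1,3)$, with $(b^m a^x)(b^n a^y)=b^{m+n}a^{y+3^n x}$. For $A\subseteq\mathbb Z$ and $m\ge 0$, $b^m a^A=\{b^m a^x: x\in A\}$. For a set $S$ in a group, $S^2=\{st: s,t\in S\}$. A set $S$ is called non-abelian if the subgroup it generates is non-abelian (and abelian otherwise). Coset decomposition: for a finite nonempty $S\subseteq BS^{+}(1,3)$, let $m_0<m_1<\cdots<m_t$ be the distinct integers $m\ge 0$ with $S\cap b^m a^{\mathbb Z}\neq\emptyset$; put $S_i=S\cap b^{m_i}a^{\mathbb Z}=b^{m_i}a^{A_i}$ with $A_i\subseteq\mathbb Z$ finite, and $k_i=|S_i|$. Writing $S=S_0\cup S_1\cup\cdots\cup S_t$ always refers to this decomposition. *)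

theory Defs
  imports Complex_Main "HOL-Algebra.Group" "HOL-Algebra.Generated_Groups"
begin

text \<open>BS(1,3) modelled concretely as Z[1/3] semidirect Z: the pair (m, x) stands for
  b^m a^x, with m an integer and x in Z[1/3]; multiplication
  (b^m a^x)(b^n a^y) = b^(m+n) a^(y + 3^n x).  Here a = (0,1), b = (1,0).\<close>

definition BS13 :: "(int \<times> rat) monoid" where
  "BS13 = \<lparr> carrier = {(m, x). \<exists>k::int. \<exists>j::nat. x = of_int k / 3 ^ j},
            mult = (\<lambda>(m, x) (n, y). (m + n, y + 3 powi n * x)),
            one = (0, 0) \<rparr>"

text \<open>Elements of the monoid BS+(1,3): the pair (m, x) with m \<ge> 0 stands for b^m a^x.\<close>
type_synonym bsp = "nat \<times> int"

definition bsp_mult :: "bsp \<Rightarrow> bsp \<Rightarrow> bsp" where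
  "bsp_mult = (\<lambda>(m, x) (n, y). (m + n, y + 3 ^ n * x))"

definition bsp_embed :: "bsp \<Rightarrow> int \<times> rat" where
  "bsp_embed = (\<lambda>(m, x). (int m, of_int x))"

definition set_square :: "bsp set \<Rightarrow> bsp set" where
  "set_square S = {bsp_mult s t | s t. s \<in> S \<and> t \<in> S}"

definition non_abelian :: "bsp set \<Rightarrow> bool" where
  "non_abelian S \<longleftrightarrow>
     (\<exists>g\<in>generate BS13 (bsp_embed ` S). \<exists>h\<in>generate BS13 (bsp_embed ` S).
        g \<otimes>\<^bsub>BS13\<^esub> h \<noteq> h \<otimes>\<^bsub>BS13\<^esub> g)"

end

theory Submission
  imports Defs
begin

text \<open>If S meets exactly two cosets b^m0 a^A0 and b^m1 a^A1 (m0 < m1),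
  the three coset products in S^2 are disjoint, and each is a dilated sumset A + 3^n B of
  integer sets; these are bounded below by |A + l B| \<ge> |A| + |B| - 1 and, splitting B into
  residue classes mod 3 or compressing it by z \<mapsto> (z - min B)/3, by |B + 3^m B| \<ge> 3|B| - 2.
  If S meets at least three cosets, remove the element u of the highest coset with the largest
  exponent of a. When S - {u} is non-abelian, four products involving u lie outside
  (S - {u})^2, which is more than the 7/2 the bound asks for. When S - {u} is abelian it lies
  in the centralizer of one of its elements, which forces |S^2| \<ge> 4|S| - 5.\<close>

definition triadic :: "rat \<Rightarrow> bool" where
  "triadic x \<longleftrightarrow> (\<exists>k::int. \<exists>j::nat. x = of_int k / 3 ^ j)"

lemma triadic_add: "triadic x \<Longrightarrow> triadic y \<Longrightarrow> triadic (x + y)"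
proof -
  assume "triadic x" "triadic y"
  then obtain k j l i where x: "x = of_int k / 3 ^ j" and y: "y = of_int l / 3 ^ i"
    unfolding triadic_def by blast
  have "x + y = of_int (k * 3 ^ i + l * 3 ^ j) / 3 ^ (i + j)"
    by (simp add: x y field_simps power_add)
  then show ?thesis unfolding triadic_def by blast
qed

lemma triadic_uminus: "triadic x \<Longrightarrow> triadic (- x)"
  unfolding triadic_def by (metis minus_divide_left of_int_minus)

lemma triadic_of_int: "triadic (of_int k)"
  unfolding triadic_def by (rule exI[of _ k], rule exI[of _ 0]) simp

lemma triadic_mult_power_int: "triadic x \<Longrightarrow> triadic (3 powi n * x)"
proof -
  assume "triadic x"
  then obtain k j where x: "x = of_int k / 3 ^ j" unfolding triadic_def by blast
  show ?thesis
  proof (cases "n \<ge> 0")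
    case True
    then have "3 powi n * x = of_int (3 ^ nat n * k) / 3 ^ j"
      by (simp add: x power_int_nonneg_exp)
    then show ?thesis unfolding triadic_def by blast
  next
    case False
    then have "3 powi n = (1::rat) / 3 ^ nat (- n)"
      by (metis power_int_minus_divide power_int_nonneg_exp minus_minus neg_0_le_iff_le nle_le)
    then have "3 powi n * x = of_int k / 3 ^ (j + nat (- n))"
      by (simp add: x power_add)
    then show ?thesis unfolding triadic_def by blast
  qed
qed

lemma BS13_carrier_iff: "p \<in> carrier BS13 \<longleftrightarrow> triadic (snd p)"
  by (cases p) (auto simp: BS13_def triadic_def)

lemma BS13_mult: "(m, x) \<otimes>\<^bsub>BS13\<^esub> (n, y) = (m + n, y + 3 powi n * x)"
  by (simp add: BS13_def)

lemma BS13_one: "\<one>\<^bsub>BS13\<^esub> = (0, 0)"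
  by (simp add: BS13_def)

lemma group_BS13: "group BS13"
proof (rule groupI)
  fix x y assume "x \<in> carrier BS13" "y \<in> carrier BS13"
  then show "x \<otimes>\<^bsub>BS13\<^esub> y \<in> carrier BS13"
    by (cases x; cases y)
      (auto simp: BS13_carrier_iff BS13_mult intro!: triadic_add triadic_mult_power_int)
next
  show "\<one>\<^bsub>BS13\<^esub> \<in> carrier BS13"
    using triadic_of_int[of 0] by (simp add: BS13_one BS13_carrier_iff)
next
  fix x y z
  show "x \<otimes>\<^bsub>BS13\<^esub> y \<otimes>\<^bsub>BS13\<^esub> z = x \<otimes>\<^bsub>BS13\<^esub> (y \<otimes>\<^bsub>BS13\<^esub> z)"
    by (cases x; cases y; cases z) (auto simp: BS13_mult power_int_add algebra_simps)
next
  fix x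
  show "\<one>\<^bsub>BS13\<^esub> \<otimes>\<^bsub>BS13\<^esub> x = x"
    by (cases x) (simp add: BS13_one BS13_mult)
next
  fix x assume "x \<in> carrier BS13"
  then obtain m a where x: "x = (m, a)" "triadic a" by (cases x) (auto simp: BS13_carrier_iff)
  have "(- m, - (3 powi (- m) * a)) \<in> carrier BS13"
    using x by (simp add: BS13_carrier_iff triadic_uminus triadic_mult_power_int)
  moreover have "(3::rat) powi m * 3 powi (- m) = 1"
    by (simp add: power_int_add[symmetric])
  then have "(- m, - (3 powi (- m) * a)) \<otimes>\<^bsub>BS13\<^esub> x = \<one>\<^bsub>BS13\<^esub>"
    by (simp add: x BS13_mult BS13_one algebra_simps)
  ultimately show "\<exists>y\<in>carrier BS13. y \<otimes>\<^bsub>BS13\<^esub> x = \<one>\<^bsub>BS13\<^esub>" by blast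
qed

lemma bsp_embed_mult: "bsp_embed (bsp_mult s t) = bsp_embed s \<otimes>\<^bsub>BS13\<^esub> bsp_embed t"
  by (cases s; cases t) (simp add: bsp_embed_def bsp_mult_def BS13_mult)

lemma bsp_embed_in_carrier: "bsp_embed s \<in> carrier BS13"
  by (cases s) (simp add: bsp_embed_def BS13_carrier_iff triadic_of_int)

definition (in group) centralizer :: "'a set \<Rightarrow> 'a set" where
  "centralizer X = {g \<in> carrier G. \<forall>x\<in>X. g \<otimes> x = x \<otimes> g}"

lemma (in group) subgroup_centralizer:
  assumes "X \<subseteq> carrier G"
  shows "subgroup (centralizer X) G"
proof (rule subgroupI)
  fix g assume g: "g \<in> centralizer X"
  have "inv g \<otimes> x = x \<otimes> inv g" if "x \<in> X" for x
  proof -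
    have x: "x \<in> carrier G" using assms that by blast
    have "g \<in> carrier G" "g \<otimes> x = x \<otimes> g" using g that by (auto simp: centralizer_def)
    then show ?thesis using x by (metis inv_solve_left inv_solve_right m_assoc m_closed inv_closed)
  qed
  then show "inv g \<in> centralizer X" using g by (simp add: centralizer_def)
next
  fix g h assume "g \<in> centralizer X" "h \<in> centralizer X"
  then show "g \<otimes> h \<in> centralizer X"
    using assms by (auto simp: centralizer_def m_assoc) (metis m_assoc subsetD)
qed (use assms in \<open>auto simp: centralizer_def intro!: exI[of _ \<one>]\<close>)

lemma (in group) generate_commuting:
  assumes "H \<subseteq> carrier G" and comm: "\<And>x y. x \<in> H \<Longrightarrow> y \<in> H \<Longrightarrow> x \<otimes> y = y \<otimes> x"
    and "g \<in> generate G H" "h \<in> generate G H"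
  shows "g \<otimes> h = h \<otimes> g"
proof -
  have "H \<subseteq> centralizer H" using assms(1) comm by (auto simp: centralizer_def)
  then have "generate G H \<subseteq> centralizer H"
    by (rule generate_subgroup_incl) (rule subgroup_centralizer[OF assms(1)])
  then have "H \<subseteq> centralizer (generate G H)"
    using assms(1) by (auto simp: centralizer_def)
  then have "generate G H \<subseteq> centralizer (generate G H)"
    by (rule generate_subgroup_incl)
      (rule subgroup_centralizer[OF generate_incl[OF assms(1)]])
  then show ?thesis using assms(3,4) by (auto simp: centralizer_def)
qed

lemma non_abelian_imp_noncommuting:
  assumes "non_abelian S"
  obtains s t where "s \<in> S" "t \<in> S" "bsp_mult s t \<noteq> bsp_mult t s"
proof -
  interpret group BS13 by (rule group_BS13)
  have "bsp_embed ` S \<subseteq> carrier BS13" using bsp_embed_in_carrier by auto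
  then show ?thesis
    using assms generate_commuting[of "bsp_embed ` S"] that
    unfolding non_abelian_def by (force simp: bsp_embed_mult[symmetric])
qed

lemma card_strict_mono2_image_ge:
  fixes f :: "'a::linorder \<Rightarrow> 'b::linorder \<Rightarrow> 'c::linorder"
  assumes mono1: "\<And>x x' y. x < x' \<Longrightarrow> f x y < f x' y"
    and mono2: "\<And>x y y'. y < y' \<Longrightarrow> f x y < f x y'"
    and X: "finite X" "X \<noteq> {}" and Y: "finite Y" "Y \<noteq> {}"
  shows "card X + card Y \<le> card {f x y |x y. x \<in> X \<and> y \<in> Y} + 1"
proof -
  \<comment> \<open>the row through the least element of Y and the column through the largest of X
      meet only in their corner\<close>
  define x1 where "x1 = Max X"
  define y0 where "y0 = Min Y"
  define R where "R = (\<lambda>x. f x y0) ` X"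
  define C where "C = f x1 ` Y"
  have "inj_on (\<lambda>x. f x y0) X" "inj_on (f x1) Y"
    by (rule inj_onI, metis linorder_neqE mono1 less_irrefl,
        rule inj_onI, metis linorder_neqE mono2 less_irrefl)
  then have cards: "card R = card X" "card C = card Y"
    unfolding R_def C_def by (simp_all add: card_image)
  have "R \<inter> C \<subseteq> {f x1 y0}"
  proof
    fix z assume "z \<in> R \<inter> C"
    then obtain x y where xy: "x \<in> X" "y \<in> Y" "z = f x y0" "z = f x1 y"
      unfolding R_def C_def by blast
    have "x \<le> x1" "y0 \<le> y" using xy X Y by (simp_all add: x1_def y0_def)
    then have "f x y0 \<le> f x1 y0" "f x1 y0 \<le> f x1 y"
      by (metis mono1 order_le_less, metis mono2 order_le_less)
    then show "z \<in> {f x1 y0}" using xy by simp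
  qed
  then have "card (R \<inter> C) \<le> 1"
    using card_mono[of "{f x1 y0}"] by fastforce
  moreover have "x1 \<in> X" "y0 \<in> Y" using X Y by (simp_all add: x1_def y0_def)
  then have "R \<union> C \<subseteq> {f x y |x y. x \<in> X \<and> y \<in> Y}"
    by (auto simp: R_def C_def)
  then have "card (R \<union> C) \<le> card {f x y |x y. x \<in> X \<and> y \<in> Y}"
    by (rule card_mono[rotated]) (use X Y in \<open>simp add: finite_image_set2\<close>)
  moreover have "card R + card C = card (R \<union> C) + card (R \<inter> C)"
    using X Y unfolding R_def C_def by (intro card_Un_Int) simp_all
  ultimately show ?thesis using cards by linarith
qed

definition dil_sumset :: "int set \<Rightarrow> int set \<Rightarrow> int \<Rightarrow> int set" where
  "dil_sumset A B l = {y + l * x |x y. x \<in> A \<and> y \<in> B}"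

lemma finite_dil_sumset: "finite A \<Longrightarrow> finite B \<Longrightarrow> finite (dil_sumset A B l)"
  unfolding dil_sumset_def by (rule finite_image_set2) simp_all

lemma card_dil_sumset_ge:
  assumes "finite A" "A \<noteq> {}" "finite B" "B \<noteq> {}" "l > 0"
  shows "card A + card B \<le> card (dil_sumset A B l) + 1"
  unfolding dil_sumset_def
  by (rule card_strict_mono2_image_ge[where f = "\<lambda>x y. y + l * x"]) (use assms in auto)

lemma dil_sumset_mono: "A \<subseteq> A' \<Longrightarrow> B \<subseteq> B' \<Longrightarrow> dil_sumset A B l \<subseteq> dil_sumset A' B' l"
  unfolding dil_sumset_def by blast

lemma dil_sumset_affine_image:
  "dil_sumset ((\<lambda>z. a + d * z) ` X) ((\<lambda>z. a + d * z) ` Y) l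
     = (\<lambda>z. a + l * a + d * z) ` dil_sumset X Y l"
proof -
  have shift: "(a + d * y) + l * (a + d * x) = a + l * a + d * (y + l * x)" for x y
    by (simp add: algebra_simps)
  show ?thesis
    unfolding dil_sumset_def
  proof (intro equalityI subsetI)
    fix w assume "w \<in> {y + l * x |x y. x \<in> (\<lambda>z. a + d * z) ` X \<and> y \<in> (\<lambda>z. a + d * z) ` Y}"
    then obtain x y where "x \<in> X" "y \<in> Y" "w = (a + d * y) + l * (a + d * x)" by blast
    then show "w \<in> (\<lambda>z. a + l * a + d * z) ` {y + l * x |x y. x \<in> X \<and> y \<in> Y}"
      unfolding shift by blast
  next
    fix w assume "w \<in> (\<lambda>z. a + l * a + d * z) ` {y + l * x |x y. x \<in> X \<and> y \<in> Y}"
    then obtain x y where "x \<in> X" "y \<in> Y" "w = (a + d * y) + l * (a + d * x)"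
      unfolding shift by blast
    then show "w \<in> {y + l * x |x y. x \<in> (\<lambda>z. a + d * z) ` X \<and> y \<in> (\<lambda>z. a + d * z) ` Y}"
      by blast
  qed
qed

lemma mod3_add_pow3_mult:
  assumes "m \<ge> (1::nat)"
  shows "(y + 3 ^ m * x) mod 3 = (y::int) mod 3"
proof -
  have "(3::int) dvd 3 ^ m * x" using assms by (simp add: dvd_power)
  then show ?thesis by (metis add.right_neutral dvd_imp_mod_0 mod_add_right_eq)
qed

lemma obtain_mod3_compression:
  fixes B :: "int set"
  assumes B: "finite B" "2 \<le> card B" and cong: "\<forall>b\<in>B. b mod 3 = Min B mod 3"
  obtains B' where "B = (\<lambda>z. Min B + 3 * z) ` B'" "finite B'" "B' \<noteq> {}" "card B' = card B"
    "nat (Max B' - Min B') < nat (Max B - Min B)"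
proof -
  define B' where "B' = (\<lambda>b. (b - Min B) div 3) ` B"
  have "b = Min B + 3 * ((b - Min B) div 3)" if "b \<in> B" for b
    using cong that by (auto simp: mod_eq_dvd_iff)
  then have B_eq: "B = (\<lambda>z. Min B + 3 * z) ` B'"
    unfolding B'_def image_image by (auto simp: image_iff)
  have ne: "B \<noteq> {}" using B by auto
  have fin': "finite B'" "B' \<noteq> {}" using B ne by (simp_all add: B'_def)
  have card': "card B' = card B"
    by (subst B_eq, rule card_image[symmetric]) (auto simp: inj_on_def)
  have "Min B \<noteq> Max B"
  proof
    assume "Min B = Max B"
    then have "B \<subseteq> {Min B}" using B by (metis Max_ge Min_le antisym subsetI singletonI)
    then show False using B card_mono[of "{Min B}" B] by simp
  qed
  then have pos: "Min B < Max B" using B ne by (simp add: order_less_le)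
  have range': "0 \<le> z \<and> z \<le> (Max B - Min B) div 3" if "z \<in> B'" for z
    using that B ne by (auto simp: B'_def intro: zdiv_mono1 pos_imp_zdiv_nonneg_iff[THEN iffD2])
  then have "0 \<le> Min B'" "Max B' \<le> (Max B - Min B) div 3"
    using fin' Max_in Min_in by blast+
  then have "nat (Max B' - Min B') < nat (Max B - Min B)" using pos by linarith
  with that B_eq fin' card' show ?thesis by blast
qed

lemma card_dil_sumset_self_pow3_ge:
  fixes B :: "int set"
  assumes "finite B" "B \<noteq> {}" "m \<ge> 1"
  shows "3 * card B \<le> card (dil_sumset B B (3 ^ m)) + 2"
  using assms(1,2)
proof (induction "nat (Max B - Min B)" arbitrary: B rule: less_induct)
  case less
  \<comment> \<open>y + 3^m x has the residue of y: either B splits into residue classes whose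
      contributions are disjoint, or B lies in one class and compresses by z \<mapsto> (z - min B)/3\<close>
  consider (singleton) "card B < 2" | (one_class) "2 \<le> card B" "\<forall>b\<in>B. b mod 3 = Min B mod 3"
    | (classes) "\<not> (\<forall>b\<in>B. b mod 3 = Min B mod 3)" by linarith
  then show ?case
  proof cases
    case singleton
    then have "card B = 1" using less.prems by (simp add: card_gt_0_iff less_2_cases_iff)
    then obtain a where "B = {a}" by (rule card_1_singletonE)
    then show ?thesis by (simp add: dil_sumset_def)
  next
    case one_class
    then obtain B' where B': "B = (\<lambda>z. Min B + 3 * z) ` B'" "finite B'" "B' \<noteq> {}"
      "card B' = card B" "nat (Max B' - Min B') < nat (Max B - Min B)"
      using obtain_mod3_compression less.prems(1) by blast
    have "dil_sumset B B (3 ^ m) = (\<lambda>z. Min B + 3 ^ m * Min B + 3 * z) ` dil_sumset B' B' (3 ^ m)"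
      by (subst (1 2) B'(1)) (rule dil_sumset_affine_image)
    then have "card (dil_sumset B B (3 ^ m)) = card (dil_sumset B' B' (3 ^ m))"
      by (simp add: card_image inj_on_def)
    then show ?thesis using less.hyps[OF B'(5,2,3)] B'(4) by simp
  next
    case classes
    define C where "C = {b \<in> B. b mod 3 = Min B mod 3}"
    define R where "R = B - C"
    have fin: "finite C" "finite R" using less.prems C_def R_def by auto
    have "Min B \<in> C" using less.prems C_def by simp
    then have ne: "C \<noteq> {}" "R \<noteq> {}" using classes C_def R_def by auto
    have "B = C \<union> R" "C \<inter> R = {}" by (auto simp: C_def R_def)
    then have card_B: "card B = card C + card R" using card_Un_disjoint[OF fin] by simp
    have "dil_sumset B C (3 ^ m) \<inter> dil_sumset B R (3 ^ m) = {}"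
      using mod3_add_pow3_mult[OF assms(3)] unfolding dil_sumset_def C_def R_def by auto metis
    moreover have "dil_sumset B C (3 ^ m) \<union> dil_sumset B R (3 ^ m) \<subseteq> dil_sumset B B (3 ^ m)"
      using \<open>B = C \<union> R\<close> dil_sumset_mono by (metis Un_least Un_upper1 Un_upper2 order_refl)
    ultimately have "card (dil_sumset B C (3 ^ m)) + card (dil_sumset B R (3 ^ m))
        \<le> card (dil_sumset B B (3 ^ m))"
      using less.prems fin
      by (simp add: card_Un_disjoint[symmetric] card_mono finite_dil_sumset)
    moreover have "card B + card C \<le> card (dil_sumset B C (3 ^ m)) + 1"
      "card B + card R \<le> card (dil_sumset B R (3 ^ m)) + 1"
      using card_dil_sumset_ge less.prems fin ne by simp_all
    ultimately show ?thesis using card_B by linarith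
  qed
qed

lemma card_sumset_union_dilate_ge_of_two_classes:
  fixes A :: "int set"
  assumes A: "finite A" "A \<noteq> {}" and "m \<ge> 1" and classes: "\<exists>a\<in>A. a mod 3 \<noteq> c mod 3"
  shows "7 * card A \<le> 2 * card (dil_sumset A A 1) + 2 * card (A \<union> (\<lambda>a. 3 ^ m * a + c) ` A) + 4"
proof -
  \<comment> \<open>the dilate 3^m A + c lies in the class of c, so it meets A only in that class\<close>
  define f where "f = (\<lambda>a::int. 3 ^ m * a + c)"
  define C where "C = {a \<in> A. a mod 3 = c mod 3}"
  define R where "R = A - C"
  have fin: "finite C" "finite R" using A C_def R_def by auto
  have "A = C \<union> R" "C \<inter> R = {}" by (auto simp: C_def R_def)
  then have card_A: "card A = card C + card R" using card_Un_disjoint[OF fin] by simp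
  have R_ne: "R \<noteq> {}" using classes C_def R_def by auto
  have "f ` A \<inter> R = {}"
    using mod3_add_pow3_mult[OF assms(3)] by (auto simp: f_def C_def R_def add.commute)
  moreover have "inj_on f A" by (auto simp: f_def inj_on_def)
  ultimately have "card (f ` A \<union> R) = card A + card R"
    using A fin by (simp add: card_Un_disjoint card_image)
  moreover have "card (f ` A \<union> R) \<le> card (A \<union> f ` A)"
    using A R_def by (intro card_mono) auto
  ultimately have union: "card A + card R \<le> card (A \<union> f ` A)" by simp
  have sumset: "2 * card A \<le> card (dil_sumset A A 1) + 1"
    using card_dil_sumset_ge[of A A 1] A by simp
  show ?thesis
  proof (cases "C = {}")
    case True
    then show ?thesis using union sumset card_A unfolding f_def by simp
  next
    case C_ne: False
    have "w mod 3 = (c + c) mod 3" if "w \<in> dil_sumset C C 1" for w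
      using that unfolding dil_sumset_def C_def by auto (metis mod_add_cong mult_2)
    moreover have "w mod 3 \<noteq> (c + c) mod 3" if w: "w \<in> dil_sumset R C 1" for w
    proof
      obtain x y where xy: "x \<in> R" "y \<in> C" "w = y + x"
        using w unfolding dil_sumset_def by auto
      then have "w mod 3 = (c + x) mod 3" by (auto simp: C_def intro: mod_add_cong)
      moreover assume "w mod 3 = (c + c) mod 3"
      ultimately have "((c + x) - c) mod 3 = ((c + c) - c) mod 3" by (metis mod_diff_cong)
      then show False using xy(1) by (simp add: R_def C_def)
    qed
    ultimately have "dil_sumset C C 1 \<inter> dil_sumset R C 1 = {}" by blast
    moreover have "dil_sumset C C 1 \<union> dil_sumset R C 1 \<subseteq> dil_sumset A A 1"
      using \<open>A = C \<union> R\<close> dil_sumset_mono by (metis Un_least Un_upper1 Un_upper2)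
    ultimately have "card (dil_sumset C C 1) + card (dil_sumset R C 1) \<le> card (dil_sumset A A 1)"
      using A fin by (simp add: card_Un_disjoint[symmetric] card_mono finite_dil_sumset)
    moreover have "2 * card C \<le> card (dil_sumset C C 1) + 1"
      "card R + card C \<le> card (dil_sumset R C 1) + 1"
      using card_dil_sumset_ge fin C_ne R_ne by (simp_all add: mult_2)
    ultimately show ?thesis using union sumset card_A unfolding f_def by linarith
  qed
qed

lemma card_sumset_union_dilate_ge:
  fixes A :: "int set"
  assumes "finite A" "A \<noteq> {}" "m \<ge> 1"
  shows "7 * card A \<le> 2 * card (dil_sumset A A 1) + 2 * card (A \<union> (\<lambda>a. 3 ^ m * a + c) ` A) + 4"
  using assms(1,2)
proof (induction "nat (Max A - Min A)" arbitrary: A c rule: less_induct)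
  case less
  consider (singleton) "card A < 2" | (one_class) "2 \<le> card A" "\<forall>a\<in>A. a mod 3 = c mod 3"
    | (classes) "\<not> (\<forall>a\<in>A. a mod 3 = c mod 3)" by linarith
  then show ?case
  proof cases
    case singleton
    then have "card A = 1" using less.prems by (simp add: card_gt_0_iff less_2_cases_iff)
    then obtain a where "A = {a}" by (rule card_1_singletonE)
    then show ?thesis by (simp add: dil_sumset_def card_insert_if)
  next
    case one_class
    have "Min A \<in> A" using less.prems by simp
    then obtain A' where A': "A = (\<lambda>z. Min A + 3 * z) ` A'" "finite A'" "A' \<noteq> {}"
      "card A' = card A" "nat (Max A' - Min A') < nat (Max A - Min A)"
      using obtain_mod3_compression less.prems(1) one_class by metis
    have "3 dvd c - Min A"
      using one_class \<open>Min A \<in> A\<close> by (metis mod_eq_dvd_iff)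
    moreover have "(3::int) dvd 3 ^ m * Min A" using assms(3) by (simp add: dvd_power)
    ultimately have "3 dvd 3 ^ m * Min A + (c - Min A)" by simp
    then obtain c' where c': "3 ^ m * Min A + c - Min A = 3 * c'"
      by (metis add_diff_eq dvd_def)
    have "dil_sumset A A 1 = (\<lambda>z. Min A + 1 * Min A + 3 * z) ` dil_sumset A' A' 1"
      by (subst (1 2) A'(1)) (rule dil_sumset_affine_image)
    then have "card (dil_sumset A A 1) = card (dil_sumset A' A' 1)"
      by (simp add: card_image inj_on_def)
    moreover have "A \<union> (\<lambda>a. 3 ^ m * a + c) ` A
        = (\<lambda>z. Min A + 3 * z) ` (A' \<union> (\<lambda>a. 3 ^ m * a + c') ` A')"
    proof -
      have "3 ^ m * (Min A + 3 * z) + c = Min A + 3 * (3 ^ m * z + c')" for z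
        using c' by (simp add: algebra_simps)
      then show ?thesis by (subst (1 2) A'(1)) (auto simp: image_image image_Un)
    qed
    then have "card (A \<union> (\<lambda>a. 3 ^ m * a + c) ` A) = card (A' \<union> (\<lambda>a. 3 ^ m * a + c') ` A')"
      by (simp add: card_image inj_on_def)
    ultimately show ?thesis using less.hyps[OF A'(5,2,3), of c'] A'(4) by simp
  next
    case classes
    then show ?thesis
      using card_sumset_union_dilate_ge_of_two_classes[OF less.prems assms(3)] by blast
  qed
qed

lemma bsp_mult_Pair [simp]: "bsp_mult (m, x) (n, y) = (m + n, y + 3 ^ n * x)"
  by (simp add: bsp_mult_def)

lemma fst_bsp_mult [simp]: "fst (bsp_mult s t) = fst s + fst t"
  by (cases s; cases t) simp

lemma snd_bsp_mult: "snd (bsp_mult s t) = snd t + 3 ^ fst t * snd s"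
  by (cases s; cases t) simp

lemma bsp_mult_in_set_square: "s \<in> S \<Longrightarrow> t \<in> S \<Longrightarrow> bsp_mult s t \<in> set_square S"
  unfolding set_square_def by blast

lemma set_squareE:
  assumes "p \<in> set_square S"
  obtains s t where "s \<in> S" "t \<in> S" "p = bsp_mult s t"
  using assms unfolding set_square_def by blast

lemma finite_set_square: "finite S \<Longrightarrow> finite (set_square S)"
  unfolding set_square_def by (rule finite_image_set2) simp_all

lemma set_square_mono: "S \<subseteq> S' \<Longrightarrow> set_square S \<subseteq> set_square S'"
  unfolding set_square_def by blast

lemma Pair_dil_sumset_subset_set_square:
  assumes "Pair m ` A \<subseteq> S" "Pair n ` B \<subseteq> S"
  shows "Pair (m + n) ` dil_sumset A B (3 ^ n) \<subseteq> set_square S"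
proof
  fix p assume "p \<in> Pair (m + n) ` dil_sumset A B (3 ^ n)"
  then obtain x y where "x \<in> A" "y \<in> B" "p = bsp_mult (m, x) (n, y)"
    unfolding dil_sumset_def by auto
  then show "p \<in> set_square S"
    using assms bsp_mult_in_set_square[of "(m, x)" S "(n, y)"] by auto
qed

lemma card_Pair_image: "card (Pair c ` A) = card A"
  by (simp add: card_image inj_on_def)

lemma card_set_square_union_two_cosets:
  assumes fin: "finite A0" "finite A1" and ne: "A0 \<noteq> {}" "A1 \<noteq> {}" and "m0 < m1"
  shows "7 * (card A0 + card A1) \<le> 2 * card (set_square (Pair m0 ` A0 \<union> Pair m1 ` A1)) + 12"
proof -
  define S where "S = Pair m0 ` A0 \<union> Pair m1 ` A1"
  define P0 where "P0 = dil_sumset A0 A0 (3 ^ m0)"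
  define P1 where "P1 = dil_sumset A0 A1 (3 ^ m1) \<union> dil_sumset A1 A0 (3 ^ m0)"
  define P2 where "P2 = dil_sumset A1 A1 (3 ^ m1)"
  have "Pair m0 ` A0 \<subseteq> S" "Pair m1 ` A1 \<subseteq> S" by (auto simp: S_def)
  note products = Pair_dil_sumset_subset_set_square[OF this(1) this(1)]
    Pair_dil_sumset_subset_set_square[OF this(1) this(2)]
    Pair_dil_sumset_subset_set_square[OF this(2) this(1)]
    Pair_dil_sumset_subset_set_square[OF this(2) this(2)]
  have "Pair (m0 + m0) ` P0 \<union> Pair (m0 + m1) ` P1 \<union> Pair (m1 + m1) ` P2 \<subseteq> set_square S"
    using products unfolding P0_def P1_def P2_def by (simp add: image_Un add.commute[of m1 m0])
  then have "card (Pair (m0 + m0) ` P0 \<union> Pair (m0 + m1) ` P1 \<union> Pair (m1 + m1) ` P2)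
      \<le> card (set_square S)"
    using fin by (intro card_mono) (simp_all add: S_def finite_set_square)
  moreover have "finite P0" "finite P1" "finite P2"
    using fin by (simp_all add: P0_def P1_def P2_def finite_dil_sumset)
  moreover have "Pair (m0 + m0) ` P0 \<inter> Pair (m0 + m1) ` P1 = {}"
    "(Pair (m0 + m0) ` P0 \<union> Pair (m0 + m1) ` P1) \<inter> Pair (m1 + m1) ` P2 = {}"
    using \<open>m0 < m1\<close> by auto
  ultimately have square: "card P0 + card P1 + card P2 \<le> card (set_square S)"
    by (simp add: card_Un_disjoint card_Pair_image)
  have P2_bound: "3 * card A1 \<le> card P2 + 2"
    using card_dil_sumset_self_pow3_ge fin ne \<open>m0 < m1\<close> by (simp add: P2_def)
  show ?thesis
  proof (cases "m0 = 0")
    case True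
    \<comment> \<open>b^0 a^A0 squares only to A0 + A0; the mixed products make up for it, since
        A1 + 3^m1 A0 and A1 + A0 together form (A0 \<union> 3^m1 A0) + A1\<close>
    define D where "D = A0 \<union> (\<lambda>a. 3 ^ m1 * a + 0) ` A0"
    have "dil_sumset D A1 1 \<subseteq> P1"
    proof
      fix w assume "w \<in> dil_sumset D A1 1"
      then obtain x y where "x \<in> D" "y \<in> A1" "w = y + x" unfolding dil_sumset_def by auto
      then show "w \<in> P1"
        using True unfolding D_def P1_def dil_sumset_def by (auto simp: add.commute)
    qed
    then have "card (dil_sumset D A1 1) \<le> card P1"
      using fin by (intro card_mono) (simp_all add: P1_def finite_dil_sumset)
    moreover have "card D + card A1 \<le> card (dil_sumset D A1 1) + 1"
      using fin ne by (intro card_dil_sumset_ge) (simp_all add: D_def)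
    moreover have "7 * card A0 \<le> 2 * card P0 + 2 * card D + 4"
      using card_sumset_union_dilate_ge[OF fin(1) ne(1), of m1 0] \<open>m0 < m1\<close> True
      by (simp add: P0_def D_def)
    ultimately show ?thesis using square P2_bound unfolding S_def add_mult_distrib2 by linarith
  next
    case False
    then have "3 * card A0 \<le> card P0 + 2"
      using card_dil_sumset_self_pow3_ge fin ne by (simp add: P0_def)
    moreover have "card (dil_sumset A0 A1 (3 ^ m1)) \<le> card P1"
      using fin by (intro card_mono) (simp_all add: P1_def finite_dil_sumset)
    moreover have "card A0 + card A1 \<le> card (dil_sumset A0 A1 (3 ^ m1)) + 1"
      using fin ne by (intro card_dil_sumset_ge) simp_all
    ultimately show ?thesis using square P2_bound unfolding S_def add_mult_distrib2 by linarith
  qed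
qed

lemma one_less_pow3: "m \<ge> 1 \<Longrightarrow> (1::int) < 3 ^ m"
  by (simp add: one_less_power)

text \<open>comm_defect u s is the exponent of a in s u minus that in u s.\<close>

definition comm_defect :: "bsp \<Rightarrow> bsp \<Rightarrow> int" where
  "comm_defect u s = (3 ^ fst u - 1) * snd s - snd u * (3 ^ fst s - 1)"

lemma bsp_mult_commute_iff_comm_defect: "bsp_mult s u = bsp_mult u s \<longleftrightarrow> comm_defect u s = 0"
  by (cases s; cases u) (auto simp: comm_defect_def algebra_simps)

lemma comm_defect_bsp_mult: "comm_defect u (bsp_mult s t) = comm_defect u t + 3 ^ fst t * comm_defect u s"
  by (cases s; cases t) (simp add: comm_defect_def power_add algebra_simps)

lemma comm_defect_self [simp]: "comm_defect u u = 0"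
  by (simp add: comm_defect_def)

lemma comm_defect_inj:
  assumes "fst u \<ge> 1" "fst s = fst t" "comm_defect u s = comm_defect u t"
  shows "s = t"
proof -
  have "(3::int) ^ fst u - 1 \<noteq> 0" using one_less_pow3[OF assms(1)] by simp
  then have "snd s = snd t" using assms(2,3) by (simp add: comm_defect_def)
  then show ?thesis using assms(2) by (simp add: prod_eq_iff)
qed

lemma bsp_mult_commute_of_comm_defect_zero:
  assumes "fst u \<ge> 1" "comm_defect u s = 0" "comm_defect u t = 0"
  shows "bsp_mult s t = bsp_mult t s"
proof -
  \<comment> \<open>the centralizer of u is the line (3^m_u - 1) x = x_u (3^m - 1), and any two of
      its points commute\<close>
  define W :: int where "W = 3 ^ fst u - 1"
  have W: "W \<noteq> 0" using one_less_pow3[OF assms(1)] by (simp add: W_def)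
  have "W * snd s = snd u * (3 ^ fst s - 1)" "W * snd t = snd u * (3 ^ fst t - 1)"
    using assms(2,3) by (simp_all add: comm_defect_def W_def)
  then have "W * (snd s * (3 ^ fst t - 1)) = W * (snd t * (3 ^ fst s - 1))"
    by (metis mult.assoc mult.commute)
  then have "snd s * (3 ^ fst t - 1) = snd t * (3 ^ fst s - 1)" using W by simp
  then show ?thesis
    by (cases s; cases t) (simp add: algebra_simps)
qed

lemma card_set_square_ge_of_inj_on_fst:
  assumes "finite L" "L \<noteq> {}" "inj_on fst L"
  shows "2 * card L \<le> card (set_square L) + 1"
proof -
  have "fst ` set_square L = {x + y |x y. x \<in> fst ` L \<and> y \<in> fst ` L}"
  proof (intro equalityI subsetI)
    fix n assume "n \<in> fst ` set_square L"
    then show "n \<in> {x + y |x y. x \<in> fst ` L \<and> y \<in> fst ` L}"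
      by (auto elim!: set_squareE) (metis fst_conv image_eqI)
  next
    fix n assume "n \<in> {x + y |x y. x \<in> fst ` L \<and> y \<in> fst ` L}"
    then obtain s t where "s \<in> L" "t \<in> L" "n = fst (bsp_mult s t)" by auto
    then show "n \<in> fst ` set_square L" by (blast intro: bsp_mult_in_set_square)
  qed
  moreover have "card (fst ` L) + card (fst ` L) \<le> card {x + y |x y. x \<in> fst ` L \<and> y \<in> fst ` L} + 1"
    using assms by (intro card_strict_mono2_image_ge) auto
  moreover have "card (fst ` set_square L) \<le> card (set_square L)"
    using assms(1) by (simp add: card_image_le finite_set_square)
  ultimately show ?thesis using card_image[OF assms(3)] by simp
qed

lemma card_le_card_fst_pos_Suc:
  assumes "finite L" "inj_on fst L"
  shows "card L \<le> card {s \<in> L. fst s \<ge> (1::nat)} + 1"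
proof -
  define L1 where "L1 = {s \<in> L. fst s \<ge> (1::nat)}"
  have "card (L - L1) = card (fst ` (L - L1))"
    using assms(2) by (simp add: card_image inj_on_diff)
  also have "\<dots> \<le> card {0::nat}"
    by (rule card_mono) (auto simp: L1_def)
  finally have "card (L - L1) \<le> 1" by simp
  moreover have "finite L1" "L1 \<subseteq> L" using assms(1) by (auto simp: L1_def)
  ultimately show ?thesis using card_Diff_subset[of L1 L] card_mono[of L L1] assms(1)
    by (simp add: L1_def)
qed

lemma card_set_square_ge_commuting_but_one:
  assumes fin: "finite S" and u: "u \<in> S"
    and comm: "\<And>s t. s \<in> S - {u} \<Longrightarrow> t \<in> S - {u} \<Longrightarrow> bsp_mult s t = bsp_mult t s"
    and z: "z \<in> S - {u}" "fst z \<ge> 1"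
    and noncomm: "s \<in> S" "t \<in> S" "bsp_mult s t \<noteq> bsp_mult t s"
  shows "4 * card (S - {u}) \<le> card (set_square S) + 1"
proof -
  \<comment> \<open>comm_defect z separates L^2 (value 0), u L (values 3^m D), L u (value D) and uu
      (value (1 + 3^m_u) D), where D = comm_defect z u is nonzero\<close>
  define L where "L = S - {u}"
  define D where "D = comm_defect z u"
  have L0: "comm_defect z s = 0" if "s \<in> L" for s
    using comm[OF that[unfolded L_def] z(1)] bsp_mult_commute_iff_comm_defect by simp
  have "D \<noteq> 0"
  proof
    assume "D = 0"
    then have "comm_defect z s = 0" if "s \<in> S" for s
      using L0 that by (cases "s = u") (auto simp: D_def L_def)
    then show False using noncomm bsp_mult_commute_of_comm_defect_zero[OF z(2)] by blast
  qed
  have inj: "inj_on fst L" by (rule inj_onI) (metis L0 comm_defect_inj z(2))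
  define L1 where "L1 = {s \<in> L. fst s \<ge> 1}"
  define N1 where "N1 = (\<lambda>s. bsp_mult u s) ` L"
  define N2 where "N2 = (\<lambda>s. bsp_mult s u) ` L1"
  have defect_P: "comm_defect z q = 0" if "q \<in> set_square L" for q
    using that L0 by (auto elim!: set_squareE simp: comm_defect_bsp_mult simp del: bsp_mult_Pair)
  have defect_N1: "comm_defect z (bsp_mult u s) = 3 ^ fst s * D" if "s \<in> L" for s
    using that L0 by (simp add: comm_defect_bsp_mult D_def)
  have defect_N2: "comm_defect z (bsp_mult s u) = D" if "s \<in> L" for s
    using that L0 by (simp add: comm_defect_bsp_mult D_def)
  have defect_uu: "comm_defect z (bsp_mult u u) = (1 + 3 ^ fst u) * D"
    by (simp add: comm_defect_bsp_mult D_def algebra_simps)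
  have "card N1 = card L"
    unfolding N1_def by (rule card_image, rule inj_onI) (metis fst_bsp_mult add_left_cancel inj inj_onD)
  moreover have "card N2 = card L1"
    unfolding N2_def by (rule card_image, rule inj_onI)
      (metis (no_types, lifting) L1_def fst_bsp_mult add_right_cancel inj inj_onD mem_Collect_eq)
  moreover have "card L \<le> card L1 + 1"
    unfolding L1_def using fin inj by (intro card_le_card_fst_pos_Suc) (simp_all add: L_def)
  moreover have "2 * card L \<le> card (set_square L) + 1"
  proof (rule card_set_square_ge_of_inj_on_fst[OF _ _ inj])
    show "finite L" "L \<noteq> {}" using fin z by (auto simp: L_def)
  qed
  moreover have "card (set_square L \<union> N1 \<union> N2 \<union> {bsp_mult u u}) \<le> card (set_square S)"
  proof (rule card_mono)
    show "finite (set_square S)" using fin by (rule finite_set_square)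
    show "set_square L \<union> N1 \<union> N2 \<union> {bsp_mult u u} \<subseteq> set_square S"
      using set_square_mono[of L S] u
      by (auto simp: L_def N1_def N2_def L1_def intro: bsp_mult_in_set_square)
  qed
  moreover have "card (set_square L \<union> N1 \<union> N2 \<union> {bsp_mult u u})
      = card (set_square L) + card N1 + card N2 + 1"
  proof -
    have "set_square L \<inter> N1 = {}"
      using defect_P defect_N1 \<open>D \<noteq> 0\<close> by (fastforce simp: N1_def)
    moreover have "(set_square L \<union> N1) \<inter> N2 = {}"
    proof -
      have "bsp_mult u s \<noteq> bsp_mult s' u" if "s \<in> L" "s' \<in> L1" for s s'
      proof
        assume eq: "bsp_mult u s = bsp_mult s' u"
        then have "fst s = fst s'" by (metis fst_bsp_mult add.commute add_left_cancel)
        then have "s = s'" using that inj by (auto simp: L1_def dest: inj_onD)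
        then have "3 ^ fst s * D = D" using eq defect_N1 defect_N2 that by (metis L1_def mem_Collect_eq)
        then show False using \<open>D \<noteq> 0\<close> one_less_pow3[of "fst s'"] that \<open>s = s'\<close> by (simp add: L1_def)
      qed
      then show ?thesis
        using defect_P defect_N2 \<open>D \<noteq> 0\<close> by (fastforce simp: N1_def N2_def L1_def)
    qed
    moreover have "bsp_mult u u \<notin> set_square L \<union> N1 \<union> N2"
    proof -
      have "(0::int) < 3 ^ fst u" by simp
      then have "1 + 3 ^ fst u \<noteq> (0::int)" "1 + 3 ^ fst u \<noteq> (1::int)" by linarith+
      then have "(1 + 3 ^ fst u) * D \<noteq> 0" "(1 + 3 ^ fst u) * D \<noteq> D"
        using \<open>D \<noteq> 0\<close> by simp_all
      moreover have "bsp_mult u u \<noteq> bsp_mult u s" if "s \<in> L" for s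
      proof
        assume eq: "bsp_mult u u = bsp_mult u s"
        then have "fst s = fst u" by (metis fst_bsp_mult add_left_cancel)
        then have "(1 + 3 ^ fst u) * D = 3 ^ fst u * D"
          using eq defect_N1[OF that] defect_uu by simp
        then show False using \<open>D \<noteq> 0\<close> by (simp add: algebra_simps)
      qed
      ultimately show ?thesis
        using defect_P defect_N2 defect_uu by (fastforce simp: N1_def N2_def L1_def)
    qed
    moreover have "finite (set_square L)" "finite N1" "finite N2"
      using fin by (simp_all add: L_def L1_def N1_def N2_def finite_set_square)
    ultimately show ?thesis by (simp add: card_Un_disjoint)
  qed
  ultimately show ?thesis unfolding L_def by linarith
qed


lemma finite_obtain_max:
  fixes f :: "'a \<Rightarrow> 'b::linorder"
  assumes "finite V" "V \<noteq> {}"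
  obtains v where "v \<in> V" "\<And>a. a \<in> V \<Longrightarrow> f a \<le> f v"
proof -
  have "Max (f ` V) \<in> f ` V" using assms by simp
  then obtain v where "v \<in> V" "f v = Max (f ` V)" by (metis imageE)
  then show ?thesis using assms that by simp
qed

lemma card_set_square_ge_add_four:
  assumes "finite S" "L \<subseteq> S"
    and "{e1, e2, e3, e4} \<subseteq> set_square S" "{e1, e2, e3, e4} \<inter> set_square L = {}"
    and "distinct [e1, e2, e3, e4]"
  shows "card (set_square L) + 4 \<le> card (set_square S)"
proof -
  have "card (set_square L \<union> {e1, e2, e3, e4}) \<le> card (set_square S)"
    using assms set_square_mono[of L S] by (intro card_mono) (auto simp: finite_set_square)
  moreover have "finite (set_square L)"
    using assms finite_subset finite_set_square by blast
  ultimately show ?thesis using assms(4,5) by (simp add: card_Un_disjoint Int_commute)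
qed

locale top_element =
  fixes S :: "bsp set" and u :: bsp
  assumes finite_S: "finite S" and top_in_S: "u \<in> S"
    and fst_le_top: "\<And>s. s \<in> S \<Longrightarrow> fst s \<le> fst u"
    and snd_le_top: "\<And>s. s \<in> S \<Longrightarrow> fst s = fst u \<Longrightarrow> snd s \<le> snd u"
    and three_cosets: "3 \<le> card (fst ` S)"
begin

abbreviation L :: "bsp set" where "L \<equiv> S - {u}"

definition m1 :: nat where "m1 = Max (fst ` S - {fst u})"

definition m2 :: nat where "m2 = Max (fst ` S - {fst u, m1})"

lemma m1_props: "m1 \<in> fst ` S" "m1 < fst u" "\<And>s. s \<in> S \<Longrightarrow> fst s \<noteq> fst u \<Longrightarrow> fst s \<le> m1"
proof -
  have "fst u \<in> fst ` S" using top_in_S by simp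
  then have "card (fst ` S - {fst u}) \<ge> 2" using three_cosets finite_S by simp
  then have ne: "fst ` S - {fst u} \<noteq> {}" by (metis card.empty not_numeral_le_zero)
  then show "m1 \<in> fst ` S" "\<And>s. s \<in> S \<Longrightarrow> fst s \<noteq> fst u \<Longrightarrow> fst s \<le> m1"
    using Max_in[OF _ ne] finite_S by (auto simp: m1_def)
  show "m1 < fst u"
    using Max_in[OF _ ne] finite_S fst_le_top by (fastforce simp: m1_def order_less_le)
qed

lemma m2_props: "m2 \<in> fst ` S" "m2 < m1"
  "\<And>s. s \<in> S \<Longrightarrow> fst s \<noteq> fst u \<Longrightarrow> fst s \<noteq> m1 \<Longrightarrow> fst s \<le> m2"
proof -
  have "{fst u, m1} \<subseteq> fst ` S" using top_in_S m1_props by auto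
  moreover have "card {fst u, m1} = 2" using m1_props by simp
  ultimately have "card (fst ` S - {fst u, m1}) \<ge> 1"
    using three_cosets finite_S by (simp add: card_Diff_subset)
  then have ne: "fst ` S - {fst u, m1} \<noteq> {}" by (metis card.empty not_one_le_zero)
  then show "m2 \<in> fst ` S" "\<And>s. s \<in> S \<Longrightarrow> fst s \<noteq> fst u \<Longrightarrow> fst s \<noteq> m1 \<Longrightarrow> fst s \<le> m2"
    using Max_in[OF _ ne] finite_S by (auto simp: m2_def)
  have "m2 \<in> fst ` S - {fst u, m1}" using Max_in[OF _ ne] finite_S by (simp add: m2_def)
  then show "m2 < m1" using m1_props(3) by fastforce
qed

lemma top_fst_pos: "fst u \<ge> 1"
  using m1_props(2) by simp

lemma gain_four_if_top_coset_shared: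
  assumes "v0 \<in> L" "fst v0 = fst u"
  shows "card (set_square L) + 4 \<le> card (set_square S)"
proof -
  \<comment> \<open>with v the largest element of L in the top coset and w the largest in the coset m1,
      the products uu, uv, vu and the larger of uw, wu exceed every product of L in their coset\<close>
  have "finite {a \<in> L. fst a = fst u}" "{a \<in> L. fst a = fst u} \<noteq> {}"
    using assms finite_S by (simp, blast)
  then obtain v where "v \<in> {a \<in> L. fst a = fst u}"
    "\<And>a. a \<in> {a \<in> L. fst a = fst u} \<Longrightarrow> snd a \<le> snd v"
    by (rule finite_obtain_max[where f = snd]) blast
  then have v: "v \<in> L" "fst v = fst u" "\<And>a. a \<in> L \<Longrightarrow> fst a = fst u \<Longrightarrow> snd a \<le> snd v"
    by auto
  have "finite {a \<in> S. fst a = m1}" "{a \<in> S. fst a = m1} \<noteq> {}"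
    using m1_props(1) finite_S by auto
  then obtain w where "w \<in> {a \<in> S. fst a = m1}" "\<And>a. a \<in> {a \<in> S. fst a = m1} \<Longrightarrow> snd a \<le> snd w"
    by (rule finite_obtain_max[where f = snd]) blast
  then have w: "w \<in> S" "fst w = m1" "\<And>a. a \<in> S \<Longrightarrow> fst a = m1 \<Longrightarrow> snd a \<le> snd w"
    by auto
  have "snd v \<noteq> snd u" using v by (metis DiffE insertI1 prod_eq_iff)
  then have v_lt: "snd v < snd u" using v snd_le_top by (simp add: order_less_le)
  have pow: "(1::int) < 3 ^ fst u" using one_less_pow3[OF top_fst_pos] .
  define e4 where "e4 = (if snd (bsp_mult w u) \<le> snd (bsp_mult u w) then bsp_mult u w else bsp_mult w u)"
  have top_bound: "snd p \<le> snd v + 3 ^ fst u * snd v"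
    if p: "p \<in> set_square L" "fst p = fst u + fst u" for p
  proof -
    obtain a b where ab: "a \<in> L" "b \<in> L" "p = bsp_mult a b"
      using p(1) by (rule set_squareE)
    then have "fst a = fst u" "fst b = fst u"
      using p(2) fst_le_top[of a] fst_le_top[of b] by auto
    then have "snd a \<le> snd v" "snd b \<le> snd v" using v(3) ab by auto
    then show ?thesis using ab \<open>fst b = fst u\<close> by (simp add: snd_bsp_mult add_mono)
  qed
  have mid_bound: "snd p < snd e4" if p: "p \<in> set_square L" "fst p = fst u + m1" for p
  proof -
    obtain a b where ab: "a \<in> L" "b \<in> L" "p = bsp_mult a b"
      using p(1) by (rule set_squareE)
    have "fst a + fst b = fst u + m1" "fst a \<le> fst u" "fst b \<le> fst u"
      "fst a \<noteq> fst u \<Longrightarrow> fst a \<le> m1" "fst b \<noteq> fst u \<Longrightarrow> fst b \<le> m1"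
      using ab p(2) fst_le_top m1_props(3) by auto
    then have "fst a = fst u \<and> fst b = m1 \<or> fst a = m1 \<and> fst b = fst u"
      using m1_props(2) by presburger
    then consider "fst a = fst u" "fst b = m1" | "fst a = m1" "fst b = fst u" by blast
    then show ?thesis
    proof cases
      case 1
      then have "snd a < snd u" "snd b \<le> snd w"
        using v(3)[of a] v_lt w(3)[of b] ab by auto
      then have "snd b + 3 ^ m1 * snd a < snd w + 3 ^ m1 * snd u" by (simp add: add_le_less_mono)
      then show ?thesis using ab 1 w(2) by (simp add: snd_bsp_mult e4_def)
    next
      case 2
      then have "snd b < snd u" "snd a \<le> snd w"
        using v(3)[of b] v_lt w(3)[of a] ab by auto
      then have "snd b + 3 ^ fst u * snd a < snd u + 3 ^ fst u * snd w" by (simp add: add_less_le_mono)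
      then show ?thesis using ab 2 w(2) by (simp add: snd_bsp_mult e4_def)
    qed
  qed
  show ?thesis
  proof (rule card_set_square_ge_add_four[OF finite_S _ _ _ _])
    show "{bsp_mult u u, bsp_mult u v, bsp_mult v u, e4} \<subseteq> set_square S"
      using top_in_S v w by (auto simp: e4_def intro: bsp_mult_in_set_square)
    have "snd v + 3 ^ fst u * snd v < snd (bsp_mult u u)"
      "snd v + 3 ^ fst u * snd v < snd (bsp_mult u v)"
      "snd v + 3 ^ fst u * snd v < snd (bsp_mult v u)"
      using v_lt v(2) by (simp_all add: snd_bsp_mult add_less_le_mono add_le_less_mono)
    moreover have "fst e4 = fst u + m1" using w by (simp add: e4_def)
    moreover have "q \<notin> set_square L"
      if "fst q = fst u + fst u" "snd v + 3 ^ fst u * snd v < snd q" for q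
      using top_bound[of q] that by linarith
    moreover have "e4 \<notin> set_square L" using mid_bound[of e4] \<open>fst e4 = fst u + m1\<close> by auto
    ultimately show "{bsp_mult u u, bsp_mult u v, bsp_mult v u, e4} \<inter> set_square L = {}"
      using v(2) by auto
    have "bsp_mult u v \<noteq> bsp_mult v u"
    proof
      assume "bsp_mult u v = bsp_mult v u"
      then have "snd v + 3 ^ fst u * snd u = snd u + 3 ^ fst u * snd v"
        using arg_cong[of _ _ snd] v(2) by (metis snd_bsp_mult)
      then have "(3 ^ fst u - 1) * (snd u - snd v) = 0" by (simp add: algebra_simps)
      then show False using pow v_lt by simp
    qed
    moreover have "bsp_mult u u \<noteq> bsp_mult u v" "bsp_mult u u \<noteq> bsp_mult v u"
      using v_lt v(2) pow by (auto simp: prod_eq_iff snd_bsp_mult)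
    moreover have "e4 \<notin> {bsp_mult u u, bsp_mult u v, bsp_mult v u}"
      using \<open>fst e4 = fst u + m1\<close> v(2) m1_props(2) by auto
    ultimately show "distinct [bsp_mult u u, bsp_mult u v, bsp_mult v u, e4]" by auto
  qed (simp add: Diff_subset)
qed

lemma fst_set_square_le_m1:
  assumes notop: "\<And>a. a \<in> L \<Longrightarrow> fst a \<noteq> fst u" and "p \<in> set_square L"
  shows "fst p \<le> m1 + m1"
proof -
  obtain a b where "a \<in> L" "b \<in> L" "p = bsp_mult a b" using assms(2) by (rule set_squareE)
  then show ?thesis using notop m1_props(3) by (simp add: add_mono)
qed

lemma gain_four_if_second_coset_large:
  assumes notop: "\<And>a. a \<in> L \<Longrightarrow> fst a \<noteq> fst u"
    and a: "a1 \<in> S" "a2 \<in> S" "fst a1 = m1" "fst a2 = m1" "snd a1 < snd a2"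
  shows "card (set_square L) + 4 \<le> card (set_square S)"
proof -
  define e4 where "e4 = (if bsp_mult a2 u \<notin> {bsp_mult u a1, bsp_mult u a2}
    then bsp_mult a2 u else bsp_mult a1 u)"
  have fst_e4: "fst e4 = fst u + m1" using a by (simp add: e4_def)
  have "e4 \<notin> {bsp_mult u a1, bsp_mult u a2}"
  proof
    \<comment> \<open>otherwise a1 u, a2 u would be u a1, u a2 in some order, but their second
        coordinates differ by 3^m_u (x2 - x1) instead of \<plusminus>(x2 - x1)\<close>
    assume e4: "e4 \<in> {bsp_mult u a1, bsp_mult u a2}"
    then have in_e: "bsp_mult a1 u \<in> {bsp_mult u a1, bsp_mult u a2}"
      "bsp_mult a2 u \<in> {bsp_mult u a1, bsp_mult u a2}"
      by (auto simp: e4_def split: if_splits)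
    have "snd (bsp_mult a2 u) - snd (bsp_mult a1 u) = 3 ^ fst u * (snd a2 - snd a1)"
      "snd (bsp_mult u a2) - snd (bsp_mult u a1) = snd a2 - snd a1"
      using a by (simp_all add: snd_bsp_mult algebra_simps)
    moreover have "snd a2 - snd a1 < 3 ^ fst u * (snd a2 - snd a1)"
      using a(5) one_less_pow3[OF top_fst_pos] by simp
    ultimately have "snd (bsp_mult a1 u) < snd (bsp_mult a2 u)"
      "snd (bsp_mult u a1) < snd (bsp_mult u a2)"
      "snd (bsp_mult u a2) - snd (bsp_mult u a1) < snd (bsp_mult a2 u) - snd (bsp_mult a1 u)"
      using a(5) by linarith+
    then show False using in_e by auto
  qed
  show ?thesis
  proof (rule card_set_square_ge_add_four[OF finite_S Diff_subset])
    show "{bsp_mult u u, bsp_mult u a1, bsp_mult u a2, e4} \<subseteq> set_square S"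
      using top_in_S a by (auto simp: e4_def intro: bsp_mult_in_set_square)
    show "{bsp_mult u u, bsp_mult u a1, bsp_mult u a2, e4} \<inter> set_square L = {}"
      using fst_set_square_le_m1[OF notop] fst_e4 a m1_props(2) by fastforce
    show "distinct [bsp_mult u u, bsp_mult u a1, bsp_mult u a2, e4]"
      using \<open>e4 \<notin> _\<close> fst_e4 a m1_props(2) by (auto simp: prod_eq_iff snd_bsp_mult)
  qed
qed

lemma eq_of_fst_gt_m2:
  assumes notop: "\<And>a. a \<in> L \<Longrightarrow> fst a \<noteq> fst u"
    and v: "\<And>a. a \<in> S \<Longrightarrow> fst a = m1 \<Longrightarrow> a = v"
    and "a \<in> L" "m2 < fst a"
  shows "a = v"
proof -
  have "a \<in> S" "fst a \<noteq> fst u" using assms(3) notop[OF assms(3)] by simp_all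
  then have "fst a = m1" using m2_props(3) assms(4) by fastforce
  then show ?thesis by (rule v[OF \<open>a \<in> S\<close>])
qed

lemma gain_four_if_second_coset_single_noncomm:
  assumes notop: "\<And>a. a \<in> L \<Longrightarrow> fst a \<noteq> fst u"
    and v: "v \<in> S" "fst v = m1" "\<And>a. a \<in> S \<Longrightarrow> fst a = m1 \<Longrightarrow> a = v"
    and noncomm: "bsp_mult u v \<noteq> bsp_mult v u"
  shows "card (set_square L) + 4 \<le> card (set_square S)"
proof -
  obtain s2 where s2: "s2 \<in> S" "fst s2 = m2" using m2_props(1) by auto
  define e4 where "e4 = (if bsp_mult u s2 \<noteq> bsp_mult v v then bsp_mult u s2 else bsp_mult s2 u)"
  have fst_e4: "fst e4 = fst u + m2" using s2 by (simp add: e4_def)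
  have "e4 \<noteq> bsp_mult v v"
  proof
    \<comment> \<open>then u s2 = s2 u = vv, but comm_defect u vanishes on u s2 and not on vv\<close>
    assume "e4 = bsp_mult v v"
    then have "bsp_mult u s2 = bsp_mult v v" "bsp_mult s2 u = bsp_mult u s2"
      by (auto simp: e4_def split: if_splits)
    moreover have "comm_defect u s2 = 0"
      using \<open>bsp_mult s2 u = bsp_mult u s2\<close> bsp_mult_commute_iff_comm_defect by blast
    ultimately have "comm_defect u (bsp_mult v v) = 0"
      by (metis comm_defect_bsp_mult comm_defect_self add.right_neutral mult_zero_right)
    moreover have "comm_defect u (bsp_mult v v) = (1 + 3 ^ fst v) * comm_defect u v"
      by (simp add: comm_defect_bsp_mult algebra_simps)
    moreover have "comm_defect u v \<noteq> 0"
      using noncomm bsp_mult_commute_iff_comm_defect[of v u] by auto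
    moreover have "(0::int) < 3 ^ fst v" by simp
    ultimately show False by (simp add: add_pos_pos)
  qed
  have "e4 \<notin> set_square L"
  proof
    assume "e4 \<in> set_square L"
    then obtain a b where ab: "a \<in> L" "b \<in> L" "e4 = bsp_mult a b" by (rule set_squareE)
    have "fst a \<le> m1" "fst b \<le> m1" using ab notop m1_props(3) by auto
    then have "m2 < fst a" "m2 < fst b" using ab fst_e4 m1_props(2) by auto
    then have "a = v" "b = v"
      using eq_of_fst_gt_m2[OF notop v(3) ab(1)] eq_of_fst_gt_m2[OF notop v(3) ab(2)] by blast+
    then show False using ab \<open>e4 \<noteq> bsp_mult v v\<close> by simp
  qed
  show ?thesis
  proof (rule card_set_square_ge_add_four[OF finite_S Diff_subset])
    show "{bsp_mult u u, bsp_mult u v, bsp_mult v u, e4} \<subseteq> set_square S"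
      using top_in_S v(1) s2(1) by (auto simp: e4_def intro: bsp_mult_in_set_square)
    show "{bsp_mult u u, bsp_mult u v, bsp_mult v u, e4} \<inter> set_square L = {}"
      using fst_set_square_le_m1[OF notop] \<open>e4 \<notin> set_square L\<close> v(2) m1_props(2) by fastforce
    show "distinct [bsp_mult u u, bsp_mult u v, bsp_mult v u, e4]"
      using noncomm fst_e4 v(2) m1_props(2) m2_props(2) by (auto dest: arg_cong[of _ _ fst])
  qed
qed

lemma gain_four_if_second_coset_single_comm:
  assumes notop: "\<And>a. a \<in> L \<Longrightarrow> fst a \<noteq> fst u"
    and v: "v \<in> S" "fst v = m1" "\<And>a. a \<in> S \<Longrightarrow> fst a = m1 \<Longrightarrow> a = v"
    and comm: "bsp_mult u v = bsp_mult v u"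
    and noncomm: "s \<in> L" "t \<in> L" "bsp_mult s t \<noteq> bsp_mult t s"
  shows "card (set_square L) + 4 \<le> card (set_square S)"
proof -
  \<comment> \<open>w: an element of L not commuting with u, in the highest possible coset; it lies
      below m1, and all elements of L above it commute with u\<close>
  define W where "W = {a \<in> L. comm_defect u a \<noteq> 0}"
  have "finite W" using finite_S by (simp add: W_def)
  moreover have "W \<noteq> {}"
  proof
    assume "W = {}"
    then have "comm_defect u a = 0" if "a \<in> L" for a using that unfolding W_def by blast
    then show False
      using noncomm bsp_mult_commute_of_comm_defect_zero[OF top_fst_pos] by blast
  qed
  ultimately obtain w where "w \<in> W" and w_max: "\<And>a. a \<in> W \<Longrightarrow> fst a \<le> fst w"
    by (rule finite_obtain_max[where f = fst]) blast
  then have w: "w \<in> L" "comm_defect u w \<noteq> 0" by (auto simp: W_def)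
  have above_w: "comm_defect u a = 0" if a: "a \<in> L" "fst w < fst a" for a
  proof (rule ccontr)
    assume "comm_defect u a \<noteq> 0"
    then have "a \<in> W" using a(1) by (simp add: W_def)
    then show False using w_max[of a] a(2) by simp
  qed
  have "comm_defect u v = 0" using comm bsp_mult_commute_iff_comm_defect[of v u] by simp
  have "w \<in> S" "fst w \<noteq> fst u" using w(1) notop[OF w(1)] by simp_all
  have "fst w \<noteq> m1"
  proof
    assume "fst w = m1"
    then have "w = v" by (rule v(3)[OF \<open>w \<in> S\<close>])
    then show False using w(2) \<open>comm_defect u v = 0\<close> by simp
  qed
  then have w_lt: "fst w < m1" using m1_props(3)[OF \<open>w \<in> S\<close> \<open>fst w \<noteq> fst u\<close>] by simp
  have defect_uw: "comm_defect u (bsp_mult u w) = comm_defect u w"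
    and defect_wu: "comm_defect u (bsp_mult w u) = 3 ^ fst u * comm_defect u w"
    by (simp_all add: comm_defect_bsp_mult)
  have defect_L: "comm_defect u p = 0" if p: "p \<in> set_square L" "fst p = fst u + fst w" for p
  proof -
    obtain a b where ab: "a \<in> L" "b \<in> L" "p = bsp_mult a b" using p(1) by (rule set_squareE)
    have "fst a \<le> m1" "fst b \<le> m1" using ab notop m1_props(3) by auto
    then have "fst w < fst a" "fst w < fst b" using ab p(2) m1_props(2) by auto
    then show ?thesis using above_w[OF ab(1)] above_w[OF ab(2)] ab(3)
      by (simp add: comm_defect_bsp_mult)
  qed
  have pow: "(1::int) < 3 ^ fst u" using one_less_pow3[OF top_fst_pos] .
  show ?thesis
  proof (rule card_set_square_ge_add_four[OF finite_S Diff_subset])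
    show "{bsp_mult u u, bsp_mult u v, bsp_mult u w, bsp_mult w u} \<subseteq> set_square S"
      using top_in_S v(1) w(1) by (auto intro: bsp_mult_in_set_square)
    have "p \<notin> set_square L" if "m1 + m1 < fst p" for p
      using fst_set_square_le_m1[OF notop, of p] that by linarith
    then have "bsp_mult u u \<notin> set_square L" "bsp_mult u v \<notin> set_square L"
      using v(2) m1_props(2) by simp_all
    moreover have "bsp_mult u w \<notin> set_square L" "bsp_mult w u \<notin> set_square L"
      using defect_L[of "bsp_mult u w"] defect_L[of "bsp_mult w u"] defect_uw defect_wu w(2)
      by (auto simp: add.commute)
    ultimately show "{bsp_mult u u, bsp_mult u v, bsp_mult u w, bsp_mult w u} \<inter> set_square L = {}"
      by blast
    have "bsp_mult u w \<noteq> bsp_mult w u"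
      using defect_uw defect_wu w(2) pow by auto
    then show "distinct [bsp_mult u u, bsp_mult u v, bsp_mult u w, bsp_mult w u]"
      using w_lt v(2) m1_props(2) by (auto dest: arg_cong[of _ _ fst])
  qed
qed

lemma gain_four_if_noncommuting:
  assumes "s \<in> L" "t \<in> L" "bsp_mult s t \<noteq> bsp_mult t s"
  shows "card (set_square L) + 4 \<le> card (set_square S)"
proof (cases "\<exists>v\<in>L. fst v = fst u")
  case True
  then show ?thesis using gain_four_if_top_coset_shared by blast
next
  case False
  then have notop: "\<And>a. a \<in> L \<Longrightarrow> fst a \<noteq> fst u" by blast
  obtain v where v: "v \<in> S" "fst v = m1" using m1_props(1) by auto
  show ?thesis
  proof (cases "\<forall>a\<in>S. fst a = m1 \<longrightarrow> a = v")
    case True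
    then have v_unique: "\<And>a. a \<in> S \<Longrightarrow> fst a = m1 \<Longrightarrow> a = v" by blast
    show ?thesis
    proof (cases "bsp_mult u v = bsp_mult v u")
      case True
      show ?thesis by (rule gain_four_if_second_coset_single_comm[OF notop v v_unique True assms])
    next
      case False
      show ?thesis by (rule gain_four_if_second_coset_single_noncomm[OF notop v v_unique False])
    qed
  next
    case False
    then obtain a where a: "a \<in> S" "fst a = m1" "a \<noteq> v" by blast
    then have "snd a \<noteq> snd v" using v by (auto simp: prod_eq_iff)
    then show ?thesis
      using gain_four_if_second_coset_large[OF notop a(1) v(1) a(2) v(2)]
        gain_four_if_second_coset_large[OF notop v(1) a(1) v(2) a(2)] by linarith
  qed
qed

end

lemma card_set_square_two_cosets:
  assumes "finite S" "fst ` S = {m0, m1}" "m0 < m1"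
  shows "7 * card S \<le> 2 * card (set_square S) + 12"
proof -
  define A0 where "A0 = Pair m0 -` S"
  define A1 where "A1 = Pair m1 -` S"
  have S_eq: "S = Pair m0 ` A0 \<union> Pair m1 ` A1"
  proof (intro equalityI subsetI)
    fix p assume "p \<in> S"
    then have "fst p = m0 \<or> fst p = m1" using assms(2) by auto
    then show "p \<in> Pair m0 ` A0 \<union> Pair m1 ` A1"
      using \<open>p \<in> S\<close> by (cases p) (auto simp: A0_def A1_def)
  qed (auto simp: A0_def A1_def)
  have "finite A0" "finite A1"
    using assms(1) by (auto simp: A0_def A1_def inj_on_def intro!: finite_vimageI)
  moreover have "A0 \<noteq> {}" "A1 \<noteq> {}"
  proof -
    obtain p q where "p \<in> S" "fst p = m0" "q \<in> S" "fst q = m1"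
      using assms(2) by (metis imageE insertI1 insertI2 singletonI)
    then have "snd p \<in> A0" "snd q \<in> A1" by (simp_all add: A0_def A1_def, metis prod.collapse)+
    then show "A0 \<noteq> {}" "A1 \<noteq> {}" by auto
  qed
  ultimately have "7 * (card A0 + card A1) \<le> 2 * card (set_square S) + 12"
    unfolding S_eq by (rule card_set_square_union_two_cosets[OF _ _ _ _ assms(3)])
  moreover have "card S = card A0 + card A1"
    using assms(3) \<open>finite A0\<close> \<open>finite A1\<close>
    by (subst S_eq, subst card_Un_disjoint) (auto simp: card_Pair_image)
  ultimately show ?thesis by simp
qed

lemma card_set_square_ge_noncommuting:
  assumes "finite S" "2 \<le> card (fst ` S)"
    and "s \<in> S" "t \<in> S" "bsp_mult s t \<noteq> bsp_mult t s"
  shows "7 * card S \<le> 2 * card (set_square S) + 12"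
  using assms
proof (induction "card S" arbitrary: S s t rule: less_induct)
  case less
  show ?case
  proof (cases "card (fst ` S) = 2")
    case True
    then obtain m0 m1 where "fst ` S = {m0, m1}" "m0 < m1"
      by (metis card_2_iff insert_commute linorder_neqE)
    then show ?thesis using card_set_square_two_cosets less.prems(1) by blast
  next
    case False
    \<comment> \<open>remove the element u of the highest coset with the largest a-exponent: this costs
        at most one product in S^2 if S - {u} commutes, and gains four otherwise\<close>
    have "fst ` S \<noteq> {}" using less.prems(3) by blast
    define mt where "mt = Max (fst ` S)"
    have "finite {a \<in> S. fst a = mt}" "{a \<in> S. fst a = mt} \<noteq> {}"
      using less.prems(1) Max_in[OF _ \<open>fst ` S \<noteq> {}\<close>] by (auto simp: mt_def)
    then obtain u where "u \<in> {a \<in> S. fst a = mt}"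
      "\<And>a. a \<in> {a \<in> S. fst a = mt} \<Longrightarrow> snd a \<le> snd u"
      by (rule finite_obtain_max[where f = snd]) blast
    then interpret top_element S u
      using less.prems(1,2) False by unfold_locales (auto simp: mt_def)
    have "card S > 0" using top_in_S finite_S card_gt_0_iff by blast
    then have card_L: "card S = card (S - {u}) + 1" using top_in_S by simp
    show ?thesis
    proof (cases "\<forall>a\<in>S - {u}. \<forall>b\<in>S - {u}. bsp_mult a b = bsp_mult b a")
      case True
      then have comm: "\<And>a b. a \<in> S - {u} \<Longrightarrow> b \<in> S - {u} \<Longrightarrow> bsp_mult a b = bsp_mult b a"
        by blast
      obtain z where "z \<in> S" "fst z = m1" using m1_props(1) by auto
      then have "z \<in> S - {u}" "fst z \<ge> 1" using m1_props(2) m2_props(2) by auto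
      then have "4 * card (S - {u}) \<le> card (set_square S) + 1"
        using card_set_square_ge_commuting_but_one[OF finite_S top_in_S comm _ _ less.prems(3-5)]
        by simp
      then show ?thesis using card_L by linarith
    next
      case False
      then obtain a b where ab: "a \<in> S - {u}" "b \<in> S - {u}" "bsp_mult a b \<noteq> bsp_mult b a"
        by blast
      obtain z1 z2 where z12: "z1 \<in> S" "fst z1 = m1" "z2 \<in> S" "fst z2 = m2"
        using m1_props(1) m2_props(1) by auto
      moreover have "z1 \<in> S - {u}" "z2 \<in> S - {u}"
        using z12 m1_props(2) m2_props(2) by auto
      ultimately have "{m1, m2} \<subseteq> fst ` (S - {u})" by (metis empty_subsetI image_eqI insert_subset)
      then have "card {m1, m2} \<le> card (fst ` (S - {u}))"
        using finite_S by (intro card_mono) auto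
      then have "2 \<le> card (fst ` (S - {u}))" using m2_props(2) by simp
      then have "7 * card (S - {u}) \<le> 2 * card (set_square (S - {u})) + 12"
        using less.hyps[OF _ _ _ ab] card_L finite_S by simp
      then show ?thesis using gain_four_if_noncommuting[OF ab] card_L by linarith
    qed
  qed
qed

theorem mainTheorem1:
  fixes S :: "bsp set"
  assumes "finite S"
    and "card S \<ge> 3"
    and "non_abelian S"
    and "\<exists>s\<in>S. \<exists>s'\<in>S. fst s \<noteq> fst s'"
  shows "real (card (set_square S)) \<ge> 7 / 2 * real (card S) - 6"
proof -
  obtain s s' where "s \<in> S" "s' \<in> S" "fst s \<noteq> fst s'" using assms(4) by blast
  then have "card {fst s, fst s'} \<le> card (fst ` S)" using assms(1) by (intro card_mono) auto
  then have "2 \<le> card (fst ` S)" using \<open>fst s \<noteq> fst s'\<close> by simp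
  moreover obtain t t' where "t \<in> S" "t' \<in> S" "bsp_mult t t' \<noteq> bsp_mult t' t"
    using non_abelian_imp_noncommuting[OF assms(3)] by blast
  ultimately have "7 * card S \<le> 2 * card (set_square S) + 12"
    using card_set_square_ge_noncommuting[OF assms(1)] by blast
  then show ?thesis by linarith
qed

end
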